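(* Let $\Bbbk$ be a field and $G$ a finite abelian group, written as $G=G_1\oplus\cdots\oplus G_p$ with each $G_i$ a finite cyclic group. Then $\operatorname{Frobdim}(\Bbbk G)=\prod_{i=1}^p|G_i|$.
   Context: $\Bbbk G$ is the group algebra. A nearly Frobenius coproduct on a $\Bbbk$-algebra $A$ is a $\Bbbk$-linear map $\Delta:A\to A\otimes_\Bbbk A$ that is an $A$-bimodule morphism, i.e. $\Delta(ab)=(a\otimes 1)\Delta(b)=\Delta(a)(1\otimes b)$ for all $a,b\in A$. The Frobenius space of $A$ is the vector space of all such coproducts, and $\operatorname{Frobdim}A$ is its dimension over $\Bbbk$. *)

theory Defs
  imports "HOL-Algebra.Algebra" "HOL-Library.Function_Algebras"
begin

text \<open>The group algebra of a finite group G over a field 'k, realised as the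
  functions carrier G \<Rightarrow> 'k (zero outside the carrier), with convolution.\<close>

definition grp_alg :: "('a, 'm) monoid_scheme \<Rightarrow> ('a \<Rightarrow> 'k::field) set" where
  "grp_alg G = {f. \<forall>x. x \<notin> carrier G \<longrightarrow> f x = 0}"

definition grp_conv :: "('a, 'm) monoid_scheme \<Rightarrow> ('a \<Rightarrow> 'k::field) \<Rightarrow> ('a \<Rightarrow> 'k) \<Rightarrow> ('a \<Rightarrow> 'k)" where
  "grp_conv G f g = (\<lambda>x. if x \<in> carrier G
      then (\<Sum>y\<in>carrier G. f y * g (inv\<^bsub>G\<^esub> y \<otimes>\<^bsub>G\<^esub> x)) else 0)"

definition grp_unit :: "('a, 'm) monoid_scheme \<Rightarrow> ('a \<Rightarrow> 'k::field)" where
  "grp_unit G = (\<lambda>x. if x = \<one>\<^bsub>G\<^esub> then 1 else 0)"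

text \<open>kG \<otimes> kG is identified with the group algebra k[G \<times> G] of the direct product
  G \<times>\<times> G via the canonical isomorphism a \<otimes> b \<mapsto> (\<lambda>(h,k). a h * b k).\<close>
definition tens :: "('a \<Rightarrow> 'k::field) \<Rightarrow> ('a \<Rightarrow> 'k) \<Rightarrow> ('a \<times> 'a \<Rightarrow> 'k)" where
  "tens a b = (\<lambda>(h, k). a h * b k)"

text \<open>Nearly Frobenius coproducts on kG: k-linear maps kG \<rightarrow> kG \<otimes> kG that are
  kG-bimodule morphisms, Delta(ab) = (a\<otimes>1)Delta(b) = Delta(a)(1\<otimes>b).  Maps are
  taken to be zero outside kG (so that they are determined by their action on kG).\<close>
definition nf_coproduct :: "('a, 'm) monoid_scheme \<Rightarrow> (('a \<Rightarrow> 'k::field) \<Rightarrow> ('a \<times> 'a \<Rightarrow> 'k)) \<Rightarrow> bool" where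
  "nf_coproduct G \<Delta> \<longleftrightarrow>
     (\<forall>f \<in> grp_alg G. \<Delta> f \<in> grp_alg (G \<times>\<times> G)) \<and>
     (\<forall>f. f \<notin> grp_alg G \<longrightarrow> \<Delta> f = 0) \<and>
     (\<forall>f \<in> grp_alg G. \<forall>g \<in> grp_alg G. \<Delta> (f + g) = \<Delta> f + \<Delta> g) \<and>
     (\<forall>c. \<forall>f \<in> grp_alg G. \<Delta> (\<lambda>x. c * f x) = (\<lambda>p. c * \<Delta> f p)) \<and>
     (\<forall>a \<in> grp_alg G. \<forall>b \<in> grp_alg G.
        \<Delta> (grp_conv G a b) = grp_conv (G \<times>\<times> G) (tens a (grp_unit G)) (\<Delta> b) \<and>
        \<Delta> (grp_conv G a b) = grp_conv (G \<times>\<times> G) (\<Delta> a) (tens (grp_unit G) b))"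

definition frob_space :: "'k::field itself \<Rightarrow> ('a, 'm) monoid_scheme \<Rightarrow> (('a \<Rightarrow> 'k) \<Rightarrow> ('a \<times> 'a \<Rightarrow> 'k)) set" where
  "frob_space _ G = {\<Delta>. nf_coproduct G \<Delta>}"

definition frobdim :: "'k::field itself \<Rightarrow> ('a, 'm) monoid_scheme \<Rightarrow> nat" where
  "frobdim K G = vector_space.dim
      (\<lambda>(c::'k) (\<Delta> :: ('a \<Rightarrow> 'k) \<Rightarrow> ('a \<times> 'a \<Rightarrow> 'k)). \<lambda>f p. c * \<Delta> f p)
      (frob_space K G)"

end

theory Submission
  imports Defs
begin

text \<open>A nearly Frobenius coproduct \<open>\<Delta>\<close> on \<open>kG\<close> is determined by \<open>u = \<Delta>(1)\<close>, since
  \<open>\<Delta>(a) = (a \<otimes> 1) u = u (1 \<otimes> a)\<close>; comparing the two expressions on basis elements shows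
  \<open>u(x, y) = u(1, y x)\<close>, so \<open>u\<close> is fixed by the values \<open>u(1, c)\<close>, \<open>c \<in> G\<close>.  Conversely each
  \<open>c\<close> gives a coproduct \<open>\<Delta>\<^sub>c(f)(x, y) = f(x c\<inverse> y)\<close>, and these are linearly independent.
  Hence \<open>Frobdim kG = |G|\<close> for every finite group \<open>G\<close>; the cyclic decomposition is only
  needed to compute \<open>|G|\<close> as the product of the orders of the factors.\<close>

lemma sum_fun_apply: "(\<Sum>i\<in>A. f i) x = (\<Sum>i\<in>A. f i x)"
  by (induction A rule: infinite_finite_induct) auto

interpretation coproduct_maps: vector_space
  "\<lambda>(c::'k::field) (\<Delta>::('x \<Rightarrow> 'k) \<Rightarrow> ('x \<times> 'x \<Rightarrow> 'k)). \<lambda>f p. c * \<Delta> f p"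
  by unfold_locales (auto simp: fun_eq_iff algebra_simps)

lemma grp_conv_in_grp_alg: "grp_conv G a b \<in> grp_alg G"
  by (simp add: grp_conv_def grp_alg_def)

context group
begin

lemma grp_unit_in_grp_alg: "grp_unit G \<in> grp_alg G"
  by (simp add: grp_unit_def grp_alg_def)

lemma grp_conv_DirProd:
  assumes "x \<in> carrier G" "y \<in> carrier G"
  shows "grp_conv (G \<times>\<times> G) u w (x, y) =
    (\<Sum>z1\<in>carrier G. \<Sum>z2\<in>carrier G. (u (z1, z2) :: 'k::field) * w (inv z1 \<otimes> x, inv z2 \<otimes> y))"
proof -
  have "grp_conv (G \<times>\<times> G) u w (x, y) =
      (\<Sum>z\<in>carrier G \<times> carrier G. u z * w (inv (fst z) \<otimes> x, inv (snd z) \<otimes> y))"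
    using assms unfolding grp_conv_def
    by (auto intro!: sum.cong simp: inv_DirProd[OF is_group is_group])
  then show ?thesis
    by (simp add: sum.cartesian_product case_prod_beta)
qed

lemma inv_mult_cancel_left: "x \<in> carrier G \<Longrightarrow> y \<in> carrier G \<Longrightarrow> inv x \<otimes> (x \<otimes> y) = y"
  and mult_inv_cancel_left: "x \<in> carrier G \<Longrightarrow> y \<in> carrier G \<Longrightarrow> x \<otimes> (inv x \<otimes> y) = y"
  by (simp_all add: m_assoc[symmetric])

lemma sum_convolution_shift:
  assumes "p \<in> carrier G" "y \<in> carrier G"
  shows "(\<Sum>z\<in>carrier G. a (p \<otimes> z) * b (inv z \<otimes> y)) =
    (\<Sum>z\<in>carrier G. (a z :: 'k::semiring_0) * b (inv z \<otimes> (p \<otimes> y)))"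
  by (rule sum.reindex_bij_witness[where i = "\<lambda>z. inv p \<otimes> z" and j = "\<lambda>z. p \<otimes> z"])
    (use assms in \<open>auto simp: m_assoc inv_mult_group inv_mult_cancel_left mult_inv_cancel_left\<close>)

lemma inv_mult_eq_one_iff: "x \<in> carrier G \<Longrightarrow> y \<in> carrier G \<Longrightarrow> inv x \<otimes> y = \<one> \<longleftrightarrow> x = y"
  using inv_solve_left'[of \<one> x y] by auto

end

locale finite_group = group G for G (structure) +
  assumes finite_carrier: "finite (carrier G)"

context finite_group
begin

lemma grp_conv_unit_right:
  assumes "f \<in> grp_alg G"
  shows "grp_conv G f (grp_unit G) = (f :: 'a \<Rightarrow> 'k::field)"
proof
  fix x
  have "grp_conv G f (grp_unit G) x = (\<Sum>y\<in>carrier G. if y = x then f y else 0)" if "x \<in> carrier G"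
    using that by (auto simp: grp_conv_def grp_unit_def inv_mult_eq_one_iff intro!: sum.cong)
  then show "grp_conv G f (grp_unit G) x = f x"
    using assms finite_carrier by (cases "x \<in> carrier G") (auto simp: grp_conv_def grp_alg_def)
qed

lemma grp_conv_unit_left:
  assumes "f \<in> grp_alg G"
  shows "grp_conv G (grp_unit G) f = (f :: 'a \<Rightarrow> 'k::field)"
proof
  fix x
  have "grp_conv G (grp_unit G) f x = (\<Sum>y\<in>carrier G. if y = \<one> then f (inv y \<otimes> x) else 0)"
    if "x \<in> carrier G"
    using that by (auto simp: grp_conv_def grp_unit_def intro!: sum.cong)
  then show "grp_conv G (grp_unit G) f x = f x"
    using assms finite_carrier by (cases "x \<in> carrier G") (auto simp: grp_conv_def grp_alg_def)
qed

lemma grp_conv_tens_unit_right: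
  assumes "x \<in> carrier G" "y \<in> carrier G"
  shows "grp_conv (G \<times>\<times> G) (tens a (grp_unit G)) w (x, y) =
    (\<Sum>z\<in>carrier G. (a z :: 'k::field) * w (inv z \<otimes> x, y))"
  using assms finite_carrier
  by (simp add: grp_conv_DirProd tens_def grp_unit_def if_distrib if_distribR cong: if_cong)

lemma grp_conv_tens_unit_left:
  assumes "x \<in> carrier G" "y \<in> carrier G"
  shows "grp_conv (G \<times>\<times> G) w (tens (grp_unit G) b) (x, y) =
    (\<Sum>z\<in>carrier G. w (x, z) * (b (inv z \<otimes> y) :: 'k::field))"
  unfolding grp_conv_DirProd[OF assms] using assms finite_carrier
  by (subst sum.swap) (simp add: tens_def grp_unit_def inv_mult_eq_one_iff if_distrib if_distribR
      cong: if_cong)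

lemma nf_coproduct_apply_unit_left:
  assumes "nf_coproduct G \<Delta>" "f \<in> grp_alg G" "x \<in> carrier G" "y \<in> carrier G"
  shows "\<Delta> f (x, y) = (\<Sum>z\<in>carrier G. (f z :: 'k::field) * \<Delta> (grp_unit G) (inv z \<otimes> x, y))"
proof -
  have "\<Delta> f = \<Delta> (grp_conv G f (grp_unit G))"
    by (simp add: grp_conv_unit_right assms(2))
  also have "\<dots> = grp_conv (G \<times>\<times> G) (tens f (grp_unit G)) (\<Delta> (grp_unit G))"
    using assms(1,2) grp_unit_in_grp_alg unfolding nf_coproduct_def by blast
  finally show ?thesis
    using assms(3,4) by (simp add: grp_conv_tens_unit_right)
qed

lemma nf_coproduct_apply_unit_right:
  assumes "nf_coproduct G \<Delta>" "f \<in> grp_alg G" "x \<in> carrier G" "y \<in> carrier G"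
  shows "\<Delta> f (x, y) = (\<Sum>z\<in>carrier G. \<Delta> (grp_unit G) (x, z) * (f (inv z \<otimes> y) :: 'k::field))"
proof -
  have "\<Delta> f = \<Delta> (grp_conv G (grp_unit G) f)"
    by (simp add: grp_conv_unit_left assms(2))
  also have "\<dots> = grp_conv (G \<times>\<times> G) (\<Delta> (grp_unit G)) (tens (grp_unit G) f)"
    using assms(1,2) grp_unit_in_grp_alg unfolding nf_coproduct_def by blast
  finally show ?thesis
    using assms(3,4) by (simp add: grp_conv_tens_unit_left)
qed

lemma nf_coproduct_unit_balanced:
  assumes nf: "nf_coproduct G \<Delta>"
    and g: "g \<in> carrier G" and x: "x \<in> carrier G" and y: "y \<in> carrier G"
  shows "\<Delta> (grp_unit G) (inv g \<otimes> x, y) = (\<Delta> (grp_unit G) (x, y \<otimes> inv g) :: 'k::field)"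
proof -
  define e :: "'a \<Rightarrow> 'k" where "e = (\<lambda>z. if z = g then 1 else 0)"
  have e: "e \<in> grp_alg G"
    using g by (auto simp: e_def grp_alg_def)
  have "\<Delta> (grp_unit G) (inv g \<otimes> x, y) = (\<Sum>z\<in>carrier G. e z * \<Delta> (grp_unit G) (inv z \<otimes> x, y))"
    using g finite_carrier by (simp add: e_def if_distrib[where f = "\<lambda>c. c * _"] cong: if_cong)
  also have "\<dots> = (\<Sum>z\<in>carrier G. \<Delta> (grp_unit G) (x, z) * e (inv z \<otimes> y))"
    using nf e x y by (simp flip: nf_coproduct_apply_unit_left nf_coproduct_apply_unit_right)
  also have "\<dots> = (\<Sum>z\<in>carrier G. if z = y \<otimes> inv g then \<Delta> (grp_unit G) (x, z) else 0)"
    using g y by (intro sum.cong) (auto simp: e_def inv_solve_left' inv_solve_right)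
  also have "\<dots> = \<Delta> (grp_unit G) (x, y \<otimes> inv g)"
    using finite_carrier g y by simp
  finally show ?thesis .
qed

lemma nf_coproduct_unit_apply:
  assumes "nf_coproduct G \<Delta>" "x \<in> carrier G" "y \<in> carrier G"
  shows "\<Delta> (grp_unit G) (x, y) = (\<Delta> (grp_unit G) (\<one>, y \<otimes> x) :: 'k::field)"
  using nf_coproduct_unit_balanced[OF assms(1), of "inv x" \<one> y] assms(2,3) by simp

lemma nf_coproduct_apply_eq_sum:
  assumes nf: "nf_coproduct G \<Delta>"
    and f: "f \<in> grp_alg G" and x: "x \<in> carrier G" and y: "y \<in> carrier G"
  shows "\<Delta> f (x, y) = (\<Sum>c\<in>carrier G. \<Delta> (grp_unit G) (\<one>, c) * (f (x \<otimes> inv c \<otimes> y) :: 'k::field))"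
proof -
  have "\<Delta> f (x, y) = (\<Sum>z\<in>carrier G. f z * \<Delta> (grp_unit G) (inv z \<otimes> x, y))"
    by (rule nf_coproduct_apply_unit_left[OF assms])
  also have "\<dots> = (\<Sum>z\<in>carrier G. f z * \<Delta> (grp_unit G) (\<one>, y \<otimes> (inv z \<otimes> x)))"
    using x y by (intro sum.cong refl) (subst nf_coproduct_unit_apply[OF nf], auto)
  also have "\<dots> = (\<Sum>c\<in>carrier G. \<Delta> (grp_unit G) (\<one>, c) * f (x \<otimes> inv c \<otimes> y))"
    by (rule sum.reindex_bij_witness[where i = "\<lambda>c. x \<otimes> inv c \<otimes> y" and j = "\<lambda>z. y \<otimes> (inv z \<otimes> x)"])
      (use x y in \<open>auto simp: m_assoc inv_mult_group inv_mult_cancel_left mult_inv_cancel_left\<close>)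
  finally show ?thesis .
qed

text \<open>On basis elements, \<open>basic_coproduct c g = (\<Sum>h\<in>G. g h\<inverse> \<otimes> c h)\<close>.\<close>
definition basic_coproduct :: "'a \<Rightarrow> ('a \<Rightarrow> 'k::field) \<Rightarrow> ('a \<times> 'a \<Rightarrow> 'k)" where
  "basic_coproduct c f = (if f \<in> grp_alg G
     then (\<lambda>(x, y). if x \<in> carrier G \<and> y \<in> carrier G then f (x \<otimes> inv c \<otimes> y) else 0)
     else 0)"

lemma basic_coproduct_apply:
  "f \<in> grp_alg G \<Longrightarrow> x \<in> carrier G \<Longrightarrow> y \<in> carrier G \<Longrightarrow>
    basic_coproduct c f (x, y) = f (x \<otimes> inv c \<otimes> y)"
  by (simp add: basic_coproduct_def)

lemma basic_coproduct_outside: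
  "\<not> (f \<in> grp_alg G \<and> x \<in> carrier G \<and> y \<in> carrier G) \<Longrightarrow> basic_coproduct c f (x, y) = 0"
  by (auto simp: basic_coproduct_def)

lemma basic_coproduct_grp_conv_left:
  assumes "c \<in> carrier G" "b \<in> grp_alg G"
  shows "basic_coproduct c (grp_conv G a b) =
    grp_conv (G \<times>\<times> G) (tens a (grp_unit G)) (basic_coproduct c b)"
proof (rule ext, clarify)
  fix x y
  show "basic_coproduct c (grp_conv G a b) (x, y) =
      grp_conv (G \<times>\<times> G) (tens a (grp_unit G)) (basic_coproduct c b) (x, y)"
  proof (cases "x \<in> carrier G \<and> y \<in> carrier G")
    case True
    then show ?thesis
      using assms by (simp add: basic_coproduct_apply grp_conv_in_grp_alg grp_conv_tens_unit_right)
        (simp add: grp_conv_def m_assoc)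
  qed (auto simp: basic_coproduct_def grp_conv_in_grp_alg grp_conv_def)
qed

lemma basic_coproduct_grp_conv_right:
  assumes "c \<in> carrier G" "a \<in> grp_alg G"
  shows "basic_coproduct c (grp_conv G a b) =
    grp_conv (G \<times>\<times> G) (basic_coproduct c a) (tens (grp_unit G) b)"
proof (rule ext, clarify)
  fix x y
  show "basic_coproduct c (grp_conv G a b) (x, y) =
      grp_conv (G \<times>\<times> G) (basic_coproduct c a) (tens (grp_unit G) b) (x, y)"
  proof (cases "x \<in> carrier G \<and> y \<in> carrier G")
    case True
    then show ?thesis
      using assms
      by (simp add: basic_coproduct_apply grp_conv_in_grp_alg grp_conv_tens_unit_left
          sum_convolution_shift) (simp add: grp_conv_def m_assoc)
  qed (auto simp: basic_coproduct_def grp_conv_in_grp_alg grp_conv_def)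
qed

lemma nf_coproduct_basic_coproduct:
  assumes "c \<in> carrier G"
  shows "nf_coproduct G (basic_coproduct c :: ('a \<Rightarrow> 'k::field) \<Rightarrow> _)"
  unfolding nf_coproduct_def
proof (intro conjI ballI allI impI)
  show "basic_coproduct c (grp_conv G a b) =
      grp_conv (G \<times>\<times> G) (tens a (grp_unit G)) (basic_coproduct c b)"
    "basic_coproduct c (grp_conv G a b) =
      grp_conv (G \<times>\<times> G) (basic_coproduct c a) (tens (grp_unit G) b)"
    if "a \<in> grp_alg G" "b \<in> grp_alg G" for a b :: "'a \<Rightarrow> 'k"
    using that assms basic_coproduct_grp_conv_left basic_coproduct_grp_conv_right by blast+
qed (auto simp: basic_coproduct_def grp_alg_def fun_eq_iff)

lemma nf_coproduct_eq_sum_basic_coproduct: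
  assumes nf: "nf_coproduct G \<Delta>"
  shows "\<Delta> = (\<Sum>c\<in>carrier G. (\<lambda>f p. (\<Delta> (grp_unit G) (\<one>, c) :: 'k::field) * basic_coproduct c f p))"
proof (intro ext)
  fix f :: "'a \<Rightarrow> 'k" and p :: "'a \<times> 'a"
  obtain x y where p: "p = (x, y)"
    by (cases p)
  have "\<Delta> f (x, y) = (\<Sum>c\<in>carrier G. \<Delta> (grp_unit G) (\<one>, c) * basic_coproduct c f (x, y))"
  proof (cases "f \<in> grp_alg G \<and> x \<in> carrier G \<and> y \<in> carrier G")
    case True
    then show ?thesis
      using nf by (simp add: nf_coproduct_apply_eq_sum basic_coproduct_apply)
  next
    case outside: False
    have "\<Delta> f (x, y) = 0"
    proof (cases "f \<in> grp_alg G")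
      case True
      then have "\<Delta> f \<in> grp_alg (G \<times>\<times> G)"
        using nf unfolding nf_coproduct_def by blast
      with True outside show ?thesis
        by (simp add: grp_alg_def)
    next
      case False
      then show ?thesis
        using nf unfolding nf_coproduct_def by simp
    qed
    with outside show ?thesis
      by (simp add: basic_coproduct_outside)
  qed
  then show "\<Delta> f p = (\<Sum>c\<in>carrier G. (\<lambda>f p. \<Delta> (grp_unit G) (\<one>, c) * basic_coproduct c f p)) f p"
    by (simp add: p sum_fun_apply)
qed

lemma basic_coproduct_unit_apply:
  assumes "c \<in> carrier G" "c' \<in> carrier G"
  shows "basic_coproduct c (grp_unit G) (\<one>, c') = (if c = c' then 1 else 0 :: 'k::field)"
  using assms
  by (subst basic_coproduct_apply[OF grp_unit_in_grp_alg]) (auto simp: grp_unit_def inv_mult_eq_one_iff)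

lemma inj_on_basic_coproduct: "inj_on (basic_coproduct :: 'a \<Rightarrow> ('a \<Rightarrow> 'k::field) \<Rightarrow> _) (carrier G)"
proof (rule inj_onI)
  fix c c' assume c: "c \<in> carrier G" and c': "c' \<in> carrier G"
    and eq: "(basic_coproduct c :: ('a \<Rightarrow> 'k) \<Rightarrow> _) = basic_coproduct c'"
  have "(basic_coproduct c :: ('a \<Rightarrow> 'k) \<Rightarrow> _) (grp_unit G) (\<one>, c) = basic_coproduct c' (grp_unit G) (\<one>, c)"
    by (simp add: eq)
  then show "c = c'"
    using c c' by (simp add: basic_coproduct_unit_apply split: if_splits)
qed

lemma independent_basic_coproducts:
  "coproduct_maps.independent ((basic_coproduct :: 'a \<Rightarrow> ('a \<Rightarrow> 'k::field) \<Rightarrow> _) ` carrier G)"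
  (is "coproduct_maps.independent ?B")
  (* A structured show of "u v = 0" would have to unify the non-pattern "?u ?v" with the rule
     premise, which is very slow; "subgoal" fixes u and v directly. *)
  apply (rule coproduct_maps.independent_if_scalars_zero)
   apply (rule finite_imageI[OF finite_carrier])
  subgoal premises prems for u v
  proof -
    from prems(2) obtain c where c: "c \<in> carrier G" and v: "v = basic_coproduct c"
      by blast
    have "0 = (\<Sum>w\<in>?B. (\<lambda>f p. u w * w f p)) (grp_unit G) (\<one>, c)"
      by (simp only: prems(1) zero_fun_def)
    also have "\<dots> = (\<Sum>w\<in>?B. if w = v then u w else 0)"
    proof (unfold sum_fun_apply, rule sum.cong [OF refl])
      fix w assume "w \<in> ?B"
      then obtain c' where c': "c' \<in> carrier G" and w: "w = basic_coproduct c'"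
        by blast
      have "w = v \<longleftrightarrow> c' = c"
        unfolding v w using c' c by (rule inj_on_eq_iff[OF inj_on_basic_coproduct])
      then show "u w * w (grp_unit G) (\<one>, c) = (if w = v then u w else 0)"
        using c c' by (simp add: w basic_coproduct_unit_apply)
    qed
    also have "\<dots> = u v"
      using prems(2) by (simp only: sum.delta[OF finite_imageI[OF finite_carrier]] if_True)
    finally show "u v = 0"
      by (rule sym)
  qed
  done

lemma frobdim_eq_card: "frobdim TYPE('k::field) G = card (carrier G)"
  unfolding frobdim_def
proof (rule coproduct_maps.dim_unique)
  let ?B = "(basic_coproduct :: 'a \<Rightarrow> ('a \<Rightarrow> 'k) \<Rightarrow> _) ` carrier G"
  show "?B \<subseteq> frob_space TYPE('k) G"
    using nf_coproduct_basic_coproduct unfolding frob_space_def by blast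
  show "frob_space TYPE('k) G \<subseteq> coproduct_maps.span ?B"
  proof
    fix \<Delta> assume "\<Delta> \<in> frob_space TYPE('k) G"
    then have "\<Delta> = (\<Sum>c\<in>carrier G. (\<lambda>f p. \<Delta> (grp_unit G) (\<one>, c) * basic_coproduct c f p))"
      unfolding frob_space_def by (simp add: nf_coproduct_eq_sum_basic_coproduct)
    also have "\<dots> \<in> coproduct_maps.span ?B"
      by (intro coproduct_maps.span_sum coproduct_maps.span_scale coproduct_maps.span_base imageI)
    finally show "\<Delta> \<in> coproduct_maps.span ?B" .
  qed
  show "coproduct_maps.independent ?B"
    by (rule independent_basic_coproducts)
  show "card ?B = card (carrier G)"
    by (rule card_image[OF inj_on_basic_coproduct])
qed

end

theorem corollary11:
  fixes G :: "'a monoid" and Gs :: "nat \<Rightarrow> 'b monoid" and p :: nat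
  assumes "comm_group G" and "finite (carrier G)"
    and "\<And>i. i < p \<Longrightarrow> group (Gs i) \<and> cyclic_group (Gs i) \<and> finite (carrier (Gs i))"
    and "G \<cong> product_group {..<p} Gs"
  shows "frobdim TYPE('k::field) G = (\<Prod>i<p. card (carrier (Gs i)))"
proof -
  interpret finite_group G
    using assms(1,2) by (simp add: finite_group_def finite_group_axioms_def comm_group.axioms(2))
  have "frobdim TYPE('k) G = card (carrier G)"
    by (rule frobdim_eq_card)
  also have "\<dots> = card (carrier (product_group {..<p} Gs))"
    by (rule iso_same_card[OF assms(4)])
  also have "\<dots> = (\<Prod>i<p. card (carrier (Gs i)))"
    by (simp add: card_PiE)
  finally show ?thesis .
qed

end
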